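(* Let $E$ be a finite set and $\omega:2^E\to[0,\infty)$ not identically zero. Let $r$ and $s$ be the maximum and minimum cardinality of sets $S$ with $\omega(S)>0$, $\ell=r-s$, and let $y_1,\dots,y_\ell$ be indeterminates indexed by $\ell$ new elements $1,\dots,\ell$. Define $f_k(\omega)=\sum_{S\subseteq E,|S|=k}\omega(S)$ and $Z(\omega^\flat;\mathbf{y})=\sum_{S\subseteq E}\omega(S)\prod_{e\in S}y_e\; e_{r-|S|}(y_1,\dots,y_\ell)$, where $e_j$ is the $j$-th elementary symmetric function (and $e_j=0$ for $j<0$ or $j>\ell$). Then the sequence $(f_k(\omega): s\le k\le r)$ is logarithmically concave with no internal zeros if and only if the polynomial in $y_1,\dots,y_\ell$ obtained from $Z(\omega^\flat;\mathbf{y})$ by setting $y_e=1$ for all $e\in E$ is Rayleigh.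
   Context: A multiaffine polynomial $Z$ in indeterminates $\{y_c\}$ with nonnegative coefficients is Rayleigh if $\Delta Z\{i,j\}=Z_iZ_j-Z_{ij}Z\ge0$ (subscripts = partial derivatives) for all distinct indices $i,j$ and all positive values of the indeterminates. A nonnegative sequence $(a_k)$ is logarithmically concave if $a_k^2\ge a_{k-1}a_{k+1}$ for all interior $k$, and has no internal zeros if $i<j<k$ and $a_ia_k\ne0$ imply $a_j\ne0$. *)

theory Defs
  imports "HOL-Analysis.Analysis"
begin

definition esym :: "nat \<Rightarrow> int \<Rightarrow> (nat \<Rightarrow> real) \<Rightarrow> real" where
  "esym l j z = (if j < 0 then 0 else
     (\<Sum>A\<in>{A. A \<subseteq> {1..l} \<and> int (card A) = j}. \<Prod>i\<in>A. z i))"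

definition fk :: "'a set \<Rightarrow> ('a set \<Rightarrow> real) \<Rightarrow> nat \<Rightarrow> real" where
  "fk E \<omega> k = (\<Sum>S\<in>{S. S \<subseteq> E \<and> card S = k}. \<omega> S)"

definition rmax :: "'a set \<Rightarrow> ('a set \<Rightarrow> real) \<Rightarrow> nat" where
  "rmax E \<omega> = Max {card S | S. S \<subseteq> E \<and> \<omega> S > 0}"

definition smin :: "'a set \<Rightarrow> ('a set \<Rightarrow> real) \<Rightarrow> nat" where
  "smin E \<omega> = Min {card S | S. S \<subseteq> E \<and> \<omega> S > 0}"

text \<open>Z(omega-flat; y): indeterminates y_e (e in E) given by y, and the new
  indeterminates y_1..y_l given by z, where l = r - s.\<close>
definition Zflat :: "'a set \<Rightarrow> ('a set \<Rightarrow> real) \<Rightarrow> ('a \<Rightarrow> real) \<Rightarrow> (nat \<Rightarrow> real) \<Rightarrow> real" where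
  "Zflat E \<omega> y z =
     (\<Sum>S\<in>{S. S \<subseteq> E}. \<omega> S * (\<Prod>e\<in>S. y e) *
        esym (rmax E \<omega> - smin E \<omega>) (int (rmax E \<omega>) - int (card S)) z)"

definition pd :: "nat \<Rightarrow> ((nat \<Rightarrow> real) \<Rightarrow> real) \<Rightarrow> (nat \<Rightarrow> real) \<Rightarrow> real" where
  "pd i Z z = deriv (\<lambda>t. Z (z(i := t))) (z i)"

definition multiaffine_nonneg :: "nat \<Rightarrow> ((nat \<Rightarrow> real) \<Rightarrow> real) \<Rightarrow> bool" where
  "multiaffine_nonneg l Z \<longleftrightarrow> (\<exists>c :: nat set \<Rightarrow> real. (\<forall>A. c A \<ge> 0) \<and>
     (\<forall>z. Z z = (\<Sum>A\<in>Pow {1..l}. c A * (\<Prod>i\<in>A. z i))))"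

definition rayleigh :: "nat \<Rightarrow> ((nat \<Rightarrow> real) \<Rightarrow> real) \<Rightarrow> bool" where
  "rayleigh l Z \<longleftrightarrow> multiaffine_nonneg l Z \<and>
     (\<forall>i\<in>{1..l}. \<forall>j\<in>{1..l}. i \<noteq> j \<longrightarrow> (\<forall>z. (\<forall>k\<in>{1..l}. z k > 0) \<longrightarrow>
        pd i Z z * pd j Z z - pd j (pd i Z) z * Z z \<ge> 0))"

definition log_concave_on :: "(nat \<Rightarrow> real) \<Rightarrow> nat \<Rightarrow> nat \<Rightarrow> bool" where
  "log_concave_on a s r \<longleftrightarrow> (\<forall>k. s < k \<and> k < r \<longrightarrow> (a k)^2 \<ge> a (k - 1) * a (k + 1))"

definition no_internal_zeros_on :: "(nat \<Rightarrow> real) \<Rightarrow> nat \<Rightarrow> nat \<Rightarrow> bool" where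
  "no_internal_zeros_on a s r \<longleftrightarrow> (\<forall>i j k. s \<le> i \<and> i < j \<and> j < k \<and> k \<le> r \<and>
      a i * a k \<noteq> 0 \<longrightarrow> a j \<noteq> 0)"

end

theory Submission
  imports Defs
begin

text \<open>Put \<open>a j = f\<^sub>r\<^sub>-\<^sub>j(\<omega>)\<close> for \<open>j \<le> l\<close> and \<open>a j = 0\<close> otherwise. Setting \<open>y\<^sub>e = 1\<close>
  turns \<open>Z(\<omega>\<^sup>\<flat>; y)\<close> into the symmetric multiaffine polynomial \<open>\<Sum>\<^sub>A a |A| y\<^sup>A\<close> in
  \<open>y\<^sub>1, \<dots>, y\<^sub>l\<close>. Its Rayleigh difference \<open>\<Delta>Z{i,j}\<close> is \<open>G\<^sub>1\<^sup>2 - G\<^sub>0 G\<^sub>2\<close>, where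
  \<open>G\<^sub>p = \<Sum>\<^sub>A a (|A| + p) y\<^sup>A\<close> ranges over the subsets \<open>A\<close> of the other variables.
  Adjoining a variable \<open>y\<^sub>k\<close> replaces the sequence \<open>G\<^sub>p\<close> by \<open>G\<^sub>p + y\<^sub>k G\<^sub>p\<^sub>+\<^sub>1\<close>, which
  preserves log-concavity with no internal zeros; hence \<open>\<Delta>Z \<ge> 0\<close> if \<open>a\<close> has these
  properties. Conversely, \<open>G\<^sub>0 G\<^sub>2 \<le> G\<^sub>1\<^sup>2\<close> on the positive orthant survives letting a
  variable tend to \<open>0\<close> or to \<open>\<infinity>\<close>, which deletes it and, in the second case, shifts \<open>p\<close>
  by one. Deleting all variables gives \<open>a p * a (p + 2) \<le> a (p + 1)\<^sup>2\<close>; keeping as many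
  variables as a run of zeros is long and evaluating at \<open>y = 1\<close> rules out internal zeros.\<close>

definition log_concave_seq :: "(nat \<Rightarrow> real) \<Rightarrow> bool" where
  "log_concave_seq c \<longleftrightarrow> (\<forall>n. c n * c (n + 2) \<le> (c (n + 1))\<^sup>2)"

definition no_internal_zeros_seq :: "(nat \<Rightarrow> real) \<Rightarrow> bool" where
  "no_internal_zeros_seq c \<longleftrightarrow> (\<forall>i j k. i < j \<and> j < k \<and> c i \<noteq> 0 \<and> c k \<noteq> 0 \<longrightarrow> c j \<noteq> 0)"

lemma log_concave_seqD: "log_concave_seq c \<Longrightarrow> c n * c (n + 2) \<le> (c (n + 1))\<^sup>2"
  by (simp add: log_concave_seq_def)

lemma no_internal_zeros_seqD:
  "no_internal_zeros_seq c \<Longrightarrow> i < j \<Longrightarrow> j < k \<Longrightarrow> c i \<noteq> 0 \<Longrightarrow> c k \<noteq> 0 \<Longrightarrow> c j \<noteq> 0"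
  unfolding no_internal_zeros_seq_def by blast

lemma log_concave_seq_three_step:
  assumes nonneg: "\<And>n. c n \<ge> 0" and lc: "log_concave_seq c" and niz: "no_internal_zeros_seq c"
  shows "c n * c (n + 3) \<le> c (n + 1) * c (n + 2)"
proof (cases "c (n + 1) = 0 \<or> c (n + 2) = 0")
  case True
  moreover have "c (n + 1) \<noteq> 0" "c (n + 2) \<noteq> 0" if "c n \<noteq> 0" "c (n + 3) \<noteq> 0"
    using no_internal_zeros_seqD[OF niz _ _ that, of "n + 1"] no_internal_zeros_seqD[OF niz _ _ that, of "n + 2"]
    by simp_all
  ultimately have "c n = 0 \<or> c (n + 3) = 0" by blast
  then show ?thesis using nonneg by (metis mult_nonneg_nonneg mult_zero_left mult_zero_right)
next
  case False
  then have pos: "c (n + 1) * c (n + 2) > 0" using nonneg by (simp add: less_le)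
  have "(c n * c (n + 3)) * (c (n + 1) * c (n + 2)) = (c n * c (n + 2)) * (c (n + 1) * c (n + 1 + 2))"
    by (simp add: ac_simps eval_nat_numeral)
  also have "\<dots> \<le> (c (n + 1))\<^sup>2 * (c (n + 1 + 1))\<^sup>2"
    using lc by (intro mult_mono log_concave_seqD) (simp_all add: nonneg)
  also have "\<dots> = (c (n + 1) * c (n + 2)) * (c (n + 1) * c (n + 2))"
    by (simp add: power2_eq_square)
  finally show ?thesis using pos by (simp add: mult_le_cancel_right)
qed

lemma log_concave_seq_add_shift:
  assumes nonneg: "\<And>n. c n \<ge> 0" and lc: "log_concave_seq c" and niz: "no_internal_zeros_seq c"
    and "x \<ge> 0"
  shows "log_concave_seq (\<lambda>n. c n + x * c (Suc n))"
  unfolding log_concave_seq_def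
proof
  fix n
  let ?d = "\<lambda>n. c n + x * c (Suc n)"
  have "(?d (n + 1))\<^sup>2 - ?d n * ?d (n + 2) = ((c (n + 1))\<^sup>2 - c n * c (n + 2))
      + x * (c (n + 1) * c (n + 2) - c n * c (n + 3)) + x\<^sup>2 * ((c (n + 2))\<^sup>2 - c (n + 1) * c (n + 3))"
    by (simp add: power2_eq_square algebra_simps numeral_3_eq_3 numeral_2_eq_2)
  moreover have "c n * c (n + 2) \<le> (c (n + 1))\<^sup>2" "c (n + 1) * c (n + 1 + 2) \<le> (c (n + 1 + 1))\<^sup>2"
    using lc by (simp_all only: log_concave_seqD)
  moreover have "c n * c (n + 3) \<le> c (n + 1) * c (n + 2)"
    by (rule log_concave_seq_three_step[OF nonneg lc niz])
  ultimately show "?d n * ?d (n + 2) \<le> (?d (n + 1))\<^sup>2"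
    using \<open>x \<ge> 0\<close> by (simp add: eval_nat_numeral) (smt (verit) mult_nonneg_nonneg zero_le_power2)
qed

lemma no_internal_zeros_seq_add_shift:
  assumes nonneg: "\<And>n. c n \<ge> 0" and niz: "no_internal_zeros_seq c" and "x \<ge> 0"
  shows "no_internal_zeros_seq (\<lambda>n. c n + x * c (Suc n))"
  unfolding no_internal_zeros_seq_def
proof (intro allI impI)
  fix i j k
  assume ijk: "i < j \<and> j < k \<and> c i + x * c (Suc i) \<noteq> 0 \<and> c k + x * c (Suc k) \<noteq> 0"
  obtain i' where i': "i' \<le> j" "c i' \<noteq> 0"
    using ijk by (metis Suc_leI less_imp_le mult_zero_right add.right_neutral)
  obtain k' where k': "j < k'" "c k' \<noteq> 0"
    using ijk by (metis less_SucI mult_zero_right add.right_neutral)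
  have "c j \<noteq> 0"
    using i' k' no_internal_zeros_seqD[OF niz, of i' j k'] by (cases "i' = j") auto
  then show "c j + x * c (Suc j) \<noteq> 0"
    using nonneg[of j] nonneg[of "Suc j"] \<open>x \<ge> 0\<close> by (smt (verit) mult_nonneg_nonneg)
qed

definition sympoly :: "(nat \<Rightarrow> real) \<Rightarrow> nat \<Rightarrow> nat set \<Rightarrow> (nat \<Rightarrow> real) \<Rightarrow> real" where
  "sympoly a p W z = (\<Sum>A\<in>Pow W. a (card A + p) * (\<Prod>i\<in>A. z i))"

lemma sympoly_empty [simp]: "sympoly a p {} z = a p"
  by (simp add: sympoly_def)

lemma sympoly_insert:
  assumes "finite W" "k \<notin> W"
  shows "sympoly a p (insert k W) z = sympoly a p W z + z k * sympoly a (Suc p) W z"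
proof -
  have inj: "inj_on (insert k) (Pow W)"
    using assms(2) unfolding inj_on_def by (metis PowD insert_ident subsetD)
  have "(\<Sum>A\<in>insert k ` Pow W. a (card A + p) * (\<Prod>i\<in>A. z i))
      = (\<Sum>A\<in>Pow W. a (card (insert k A) + p) * (\<Prod>i\<in>insert k A. z i))"
    by (simp add: sum.reindex[OF inj])
  also have "\<dots> = (\<Sum>A\<in>Pow W. z k * (a (card A + Suc p) * (\<Prod>i\<in>A. z i)))"
  proof (rule sum.cong[OF refl])
    fix A assume "A \<in> Pow W"
    then have "finite A" "k \<notin> A" using assms finite_subset by auto
    then show "a (card (insert k A) + p) * (\<Prod>i\<in>insert k A. z i)
      = z k * (a (card A + Suc p) * (\<Prod>i\<in>A. z i))" by simp
  qed
  finally show ?thesis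
    unfolding sympoly_def Pow_insert sum_distrib_left[symmetric] using assms
    by (subst sum.union_disjoint) auto
qed

lemma sympoly_cong: "(\<And>i. i \<in> W \<Longrightarrow> z i = w i) \<Longrightarrow> sympoly a p W z = sympoly a p W w"
  unfolding sympoly_def by (intro sum.cong arg_cong2[where f = "(*)"] prod.cong) auto

lemma sympoly_fun_upd:
  assumes "finite V" "i \<in> V"
  shows "sympoly a p V (z(i := t)) = sympoly a p (V - {i}) z + t * sympoly a (Suc p) (V - {i}) z"
proof -
  have "V = insert i (V - {i})" using assms(2) by auto
  then have "sympoly a p V (z(i := t))
      = sympoly a p (V - {i}) (z(i := t)) + t * sympoly a (Suc p) (V - {i}) (z(i := t))"
    using assms(1) by (metis sympoly_insert finite_Diff fun_upd_same Diff_iff singletonI)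
  moreover have "sympoly a q (V - {i}) (z(i := t)) = sympoly a q (V - {i}) z" for q
    by (rule sympoly_cong) simp
  ultimately show ?thesis by simp
qed

lemma pd_sympoly:
  assumes "finite V" "i \<in> V"
  shows "pd i (sympoly a p V) = sympoly a (Suc p) (V - {i})"
proof
  fix z
  have "pd i (sympoly a p V) z
      = deriv (\<lambda>t. sympoly a p (V - {i}) z + t * sympoly a (Suc p) (V - {i}) z) (z i)"
    unfolding pd_def sympoly_fun_upd[OF assms] ..
  also have "\<dots> = sympoly a (Suc p) (V - {i}) z"
    by (rule DERIV_imp_deriv) (auto intro!: derivative_eq_intros)
  finally show "pd i (sympoly a p V) z = sympoly a (Suc p) (V - {i}) z" .
qed

lemma rayleigh_difference_sympoly:
  assumes "finite V" "i \<in> V" "j \<in> V" "i \<noteq> j"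
  defines "W \<equiv> V - {i, j}"
  shows "pd i (sympoly a 0 V) z * pd j (sympoly a 0 V) z - pd j (pd i (sympoly a 0 V)) z * sympoly a 0 V z
     = (sympoly a 1 W z)\<^sup>2 - sympoly a 0 W z * sympoly a 2 W z"
proof -
  have W: "finite W" "i \<notin> W" "j \<notin> W"
    using assms by auto
  have "V - {i} = insert j W" "V - {j} = insert i W" "insert j W - {j} = W"
    using assms by auto
  then have "pd i (sympoly a 0 V) = sympoly a 1 (insert j W)"
    "pd j (sympoly a 0 V) = sympoly a 1 (insert i W)"
    "pd j (pd i (sympoly a 0 V)) = sympoly a 2 W"
    using assms(1-3) W by (simp_all add: pd_sympoly numeral_2_eq_2)
  moreover have "V = insert i (insert j W)"
    using assms by auto
  then have "sympoly a 0 V z = sympoly a 0 (insert j W) z + z i * sympoly a 1 (insert j W) z"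
    using W assms(4) by (simp add: sympoly_insert)
  ultimately show ?thesis
    using W by (simp add: sympoly_insert numeral_2_eq_2 power2_eq_square algebra_simps)
qed

lemma sympoly_seq_log_concave:
  assumes "finite W" "\<And>k. k \<in> W \<Longrightarrow> w k \<ge> 0"
    and "\<And>n. a n \<ge> 0" "log_concave_seq a" "no_internal_zeros_seq a"
  shows "(\<forall>n. sympoly a n W w \<ge> 0) \<and> log_concave_seq (\<lambda>n. sympoly a n W w)
    \<and> no_internal_zeros_seq (\<lambda>n. sympoly a n W w)"
  using assms
proof (induction W rule: finite_induct)
  case empty
  then show ?case by simp
next
  case (insert k W)
  let ?c = "\<lambda>n. sympoly a n W w"
  have c: "\<And>n. ?c n \<ge> 0" "log_concave_seq ?c" "no_internal_zeros_seq ?c" and "w k \<ge> 0"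
    using insert by simp_all
  moreover have "sympoly a n (insert k W) w = ?c n + w k * ?c (Suc n)" for n
    using insert by (simp add: sympoly_insert)
  ultimately show ?case
    using log_concave_seq_add_shift[OF c] no_internal_zeros_seq_add_shift[OF c(1,3)] by simp
qed

lemma nonneg_quadratic_on_pos_coeffs:
  fixes c0 c1 c2 :: real
  assumes "\<And>t. t > 0 \<Longrightarrow> 0 \<le> c0 + c1 * t + c2 * t\<^sup>2"
  shows "0 \<le> c0" "0 \<le> c2"
proof -
  have const_nonneg: "0 \<le> d0"
    if "\<And>t. t > 0 \<Longrightarrow> 0 \<le> d0 + d1 * t + d2 * t\<^sup>2" for d0 d1 d2 :: real
  proof (rule tendsto_lowerbound)
    show "((\<lambda>t. d0 + d1 * t + d2 * t\<^sup>2) \<longlongrightarrow> d0) (at_right 0)"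
      by (auto intro!: tendsto_eq_intros)
    show "\<forall>\<^sub>F t in at_right 0. 0 \<le> d0 + d1 * t + d2 * t\<^sup>2"
      using that eventually_at_right_less[of 0] by (auto elim: eventually_mono)
  qed simp
  show "0 \<le> c0"
    using assms by (rule const_nonneg)
  show "0 \<le> c2"
  proof (rule const_nonneg)
    fix u :: real
    assume "u > 0"
    then have "c2 + c1 * u + c0 * u\<^sup>2 = u\<^sup>2 * (c0 + c1 * (1 / u) + c2 * (1 / u)\<^sup>2)"
      by (simp add: field_simps power2_eq_square)
    with \<open>u > 0\<close> show "0 \<le> c2 + c1 * u + c0 * u\<^sup>2"
      using assms[of "1 / u"] by simp
  qed
qed

definition sympoly_lc :: "(nat \<Rightarrow> real) \<Rightarrow> nat \<Rightarrow> nat set \<Rightarrow> bool" where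
  "sympoly_lc a p W \<longleftrightarrow> (\<forall>w. (\<forall>k\<in>W. w k > 0) \<longrightarrow>
     sympoly a p W w * sympoly a (Suc (Suc p)) W w \<le> (sympoly a (Suc p) W w)\<^sup>2)"

text \<open>Put \<open>z k = t\<close> and let \<open>t \<rightarrow> 0\<close>, resp. \<open>t \<rightarrow> \<infinity>\<close>.\<close>

lemma sympoly_lc_Diff:
  assumes "finite W" "k \<in> W" "sympoly_lc a p W"
  shows "sympoly_lc a p (W - {k})" "sympoly_lc a (Suc p) (W - {k})"
proof -
  let ?U = "W - {k}"
  have "A * C \<le> B\<^sup>2 \<and> B * D \<le> C\<^sup>2"
    if w: "\<forall>i\<in>?U. w i > 0" and defs: "A = sympoly a p ?U w" "B = sympoly a (Suc p) ?U w"
      "C = sympoly a (Suc (Suc p)) ?U w" "D = sympoly a (Suc (Suc (Suc p))) ?U w" for w A B C D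
  proof -
    have "0 \<le> (B\<^sup>2 - A * C) + (B * C - A * D) * t + (C\<^sup>2 - B * D) * t\<^sup>2" if "t > 0" for t
    proof -
      have "\<forall>i\<in>W. (w(k := t)) i > 0"
        using w \<open>t > 0\<close> by auto
      with assms(3) have "sympoly a p W (w(k := t)) * sympoly a (Suc (Suc p)) W (w(k := t))
          \<le> (sympoly a (Suc p) W (w(k := t)))\<^sup>2"
        unfolding sympoly_lc_def by blast
      then have "(A + t * B) * (C + t * D) \<le> (B + t * C)\<^sup>2"
        using assms(1,2) by (simp add: sympoly_fun_upd defs)
      then show ?thesis
        by (simp add: algebra_simps power2_eq_square)
    qed
    from nonneg_quadratic_on_pos_coeffs[OF this] show ?thesis by simp
  qed
  then show "sympoly_lc a p ?U" "sympoly_lc a (Suc p) ?U"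
    unfolding sympoly_lc_def by simp_all
qed

lemma sympoly_lc_shrink:
  assumes "finite W" "sympoly_lc a p W" "q + n \<le> card W"
  shows "\<exists>V. finite V \<and> card V = n \<and> sympoly_lc a (p + q) V"
  using assms
proof (induction W arbitrary: p q rule: finite_induct)
  case empty
  then show ?case by (intro exI[of _ "{}"]) simp
next
  case (insert k W)
  have "insert k W - {k} = W"
    using insert.hyps by simp
  then have lc: "sympoly_lc a p W" "sympoly_lc a (Suc p) W"
    using sympoly_lc_Diff[OF _ insertI1 insert.prems(1)] insert.hyps(1) by simp_all
  show ?case
  proof (cases "q + n \<le> card W")
    case True
    then show ?thesis using insert.IH[OF lc(1)] by blast
  next
    case False
    then have sum_eq: "q + n = Suc (card W)"
      using insert.prems(2) insert.hyps by simp
    show ?thesis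
    proof (cases q)
      case 0
      then show ?thesis
        using sum_eq insert by (intro exI[of _ "insert k W"]) simp
    next
      case (Suc q')
      then have "q' + n \<le> card W"
        using sum_eq by simp
      from insert.IH[OF lc(2) this] show ?thesis
        using Suc by simp
    qed
  qed
qed

lemma log_concave_seq_if_sympoly_lc:
  assumes "finite W" "sympoly_lc a 0 W" "\<And>n. n > card W + 2 \<Longrightarrow> a n = 0"
  shows "log_concave_seq a"
  unfolding log_concave_seq_def
proof
  fix n
  show "a n * a (n + 2) \<le> (a (n + 1))\<^sup>2"
  proof (cases "n \<le> card W")
    case True
    then obtain V where "finite V" "card V = 0" "sympoly_lc a n V"
      using sympoly_lc_shrink[OF assms(1,2), of n 0] by auto
    then show ?thesis
      unfolding sympoly_lc_def by (simp add: numeral_2_eq_2)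
  next
    case False
    then show ?thesis using assms(3)[of "n + 2"] by simp
  qed
qed

lemma no_internal_zeros_seqI:
  assumes "\<And>p q. p < q \<Longrightarrow> c p \<noteq> 0 \<Longrightarrow> c q \<noteq> 0 \<Longrightarrow> (\<And>x. p < x \<Longrightarrow> x < q \<Longrightarrow> c x = 0) \<Longrightarrow> q = Suc p"
  shows "no_internal_zeros_seq c"
proof -
  have "c j \<noteq> 0" if "i < j" "j < k" "c i \<noteq> 0" "c k \<noteq> 0" for i j k
    using that
  proof (induction "k - i" arbitrary: i k rule: less_induct)
    case less
    show ?case
    proof (cases "\<exists>x. i < x \<and> x < k \<and> c x \<noteq> 0")
      case True
      then obtain x where x: "i < x" "x < k" "c x \<noteq> 0" by blast
      consider "x = j" | "x < j" | "j < x" by linarith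
      then show ?thesis
      proof cases
        case 1
        then show ?thesis using x by simp
      next
        case 2
        then show ?thesis using less x by (intro less.hyps[of k x]) auto
      next
        case 3
        then show ?thesis using less x by (intro less.hyps[of x i]) auto
      qed
    next
      case False
      then have "c x = 0" if "i < x" "x < k" for x
        using that by blast
      with less.prems have "k = Suc i"
        by (intro assms) auto
      then show ?thesis using less.prems by simp
    qed
  qed
  then show ?thesis
    unfolding no_internal_zeros_seq_def by blast
qed

text \<open>If \<open>a p, a q > 0\<close> but \<open>a (p + 1) = \<dots> = a (q - 1) = 0\<close>, then at \<open>w = 1\<close> in
  \<open>q - p - 2\<close> variables the left side of the \<open>sympoly_lc\<close> inequality is
  \<open>a p * (a q + \<dots>) > 0\<close> while its right side is \<open>0\<close>.\<close>

lemma no_internal_zeros_seq_if_sympoly_lc: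
  assumes "finite W" "sympoly_lc a 0 W" "\<And>n. n > card W + 2 \<Longrightarrow> a n = 0" "\<And>n. a n \<ge> 0"
  shows "no_internal_zeros_seq a"
proof (rule no_internal_zeros_seqI, rule ccontr)
  fix p q
  assume "p < q" "a p \<noteq> 0" "a q \<noteq> 0" "q \<noteq> Suc p" and gap: "\<And>x. p < x \<Longrightarrow> x < q \<Longrightarrow> a x = 0"
  then have pos: "a p > 0" "a q > 0"
    using assms(4) by (simp_all add: less_le)
  have "q \<le> card W + 2"
    using \<open>a q \<noteq> 0\<close> assms(3) not_le by blast
  moreover have "p + 2 \<le> q"
    using \<open>p < q\<close> \<open>q \<noteq> Suc p\<close> by linarith
  ultimately have "p + (q - p - 2) \<le> card W"
    by linarith
  then obtain V where V: "finite V" "card V = q - p - 2" "sympoly_lc a p V"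
    using sympoly_lc_shrink[OF assms(1,2)] by (metis add_0)
  have small: "card A \<le> q - p - 2" if "A \<in> Pow V" for A
    using that V(1,2) card_mono by (metis PowD)
  let ?one = "\<lambda>_. 1 :: real"
  have "sympoly a p V ?one = (\<Sum>A\<in>Pow V. if A = {} then a p else 0)"
    unfolding sympoly_def
  proof (intro sum.cong refl)
    fix A assume A: "A \<in> Pow V"
    show "a (card A + p) * (\<Prod>i\<in>A. ?one i) = (if A = {} then a p else 0)"
    proof (cases "A = {}")
      case False
      then have "card A > 0"
        using A V(1) finite_subset by (auto simp: card_gt_0_iff)
      then show ?thesis
        using gap[of "card A + p"] small[OF A] \<open>p + 2 \<le> q\<close> False by simp
    qed simp
  qed
  also have "\<dots> = a p"
    using V(1) by simp
  finally have zero_shift: "sympoly a p V ?one = a p" .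
  have one_shift: "sympoly a (Suc p) V ?one = 0"
    unfolding sympoly_def
  proof (intro sum.neutral ballI)
    fix A assume "A \<in> Pow V"
    with small have "card A \<le> q - p - 2" .
    then have "a (card A + Suc p) = 0"
      using \<open>p + 2 \<le> q\<close> by (intro gap) linarith+
    then show "a (card A + Suc p) * (\<Prod>i\<in>A. ?one i) = 0"
      by simp
  qed
  have "q = card V + Suc (Suc p)"
    using V(2) \<open>p + 2 \<le> q\<close> by linarith
  then have "a q \<le> (\<Sum>A\<in>Pow V. a (card A + Suc (Suc p)))"
    using member_le_sum[of V "Pow V" "\<lambda>A. a (card A + Suc (Suc p))"] V(1) assms(4) by simp
  also have "\<dots> = sympoly a (Suc (Suc p)) V ?one"
    by (simp add: sympoly_def)
  finally have "a p * a q \<le> a p * sympoly a (Suc (Suc p)) V ?one"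
    using pos by simp
  also have "\<dots> \<le> (sympoly a (Suc p) V ?one)\<^sup>2"
    using V(3) zero_shift unfolding sympoly_lc_def by (metis zero_less_one)
  also have "\<dots> = 0"
    using one_shift by simp
  finally show False
    using mult_pos_pos[OF pos] by linarith
qed

lemma rayleigh_sympoly:
  assumes "\<And>n. a n \<ge> 0" "log_concave_seq a" "no_internal_zeros_seq a"
  shows "rayleigh l (sympoly a 0 {1..l})"
  unfolding rayleigh_def
proof (intro conjI ballI impI allI)
  show "multiaffine_nonneg l (sympoly a 0 {1..l})"
    unfolding multiaffine_nonneg_def sympoly_def using assms(1)
    by (intro exI[of _ "\<lambda>A. a (card A)"]) simp
next
  fix i j and z :: "nat \<Rightarrow> real"
  assume ij: "i \<in> {1..l}" "j \<in> {1..l}" "i \<noteq> j" and z: "\<forall>k\<in>{1..l}. z k > 0"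
  let ?W = "{1..l} - {i, j}"
  have "log_concave_seq (\<lambda>n. sympoly a n ?W z)"
    using sympoly_seq_log_concave[of ?W z a] z assms by (simp add: less_imp_le)
  then have "sympoly a 0 ?W z * sympoly a 2 ?W z \<le> (sympoly a 1 ?W z)\<^sup>2"
    by (auto dest: log_concave_seqD[of _ 0] simp: numeral_2_eq_2)
  then show "pd i (sympoly a 0 {1..l}) z * pd j (sympoly a 0 {1..l}) z
      - pd j (pd i (sympoly a 0 {1..l})) z * sympoly a 0 {1..l} z \<ge> 0"
    using rayleigh_difference_sympoly[of "{1..l}" i j a z] ij by simp
qed

lemma sympoly_lc_if_rayleigh:
  assumes "rayleigh l (sympoly a 0 {1..l})" "2 \<le> l"
  shows "sympoly_lc a 0 ({1..l} - {1, 2})"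
  unfolding sympoly_lc_def
proof (intro allI impI)
  let ?W = "{1..l} - {1, 2}"
  fix w :: "nat \<Rightarrow> real"
  assume "\<forall>k\<in>?W. w k > 0"
  define z where "z = w(1 := 1, 2 := 1)"
  have "\<forall>k\<in>{1..l}. z k > 0" "(1::nat) \<in> {1..l}" "(2::nat) \<in> {1..l}" "(1::nat) \<noteq> 2"
    using \<open>\<forall>k\<in>?W. w k > 0\<close> assms(2) by (auto simp: z_def)
  then have "0 \<le> pd 1 (sympoly a 0 {1..l}) z * pd 2 (sympoly a 0 {1..l}) z
      - pd 2 (pd 1 (sympoly a 0 {1..l})) z * sympoly a 0 {1..l} z"
    using assms(1) unfolding rayleigh_def by blast
  also have "\<dots> = (sympoly a 1 ?W z)\<^sup>2 - sympoly a 0 ?W z * sympoly a 2 ?W z"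
    using assms(2) by (intro rayleigh_difference_sympoly) auto
  moreover have "sympoly a p ?W z = sympoly a p ?W w" for p
    unfolding z_def by (rule sympoly_cong) auto
  ultimately show "sympoly a 0 ?W w * sympoly a (Suc (Suc 0)) ?W w \<le> (sympoly a (Suc 0) ?W w)\<^sup>2"
    by (simp add: numeral_2_eq_2)
qed

lemma log_concave_seq_if_rayleigh_sympoly:
  assumes "\<And>n. a n \<ge> 0" "\<And>n. n > l \<Longrightarrow> a n = 0" "rayleigh l (sympoly a 0 {1..l})"
  shows "log_concave_seq a \<and> no_internal_zeros_seq a"
proof (cases "2 \<le> l")
  case True
  let ?W = "{1..l} - {1, 2}"
  have "finite ?W" "card ?W + 2 = l"
    using True by (simp_all add: card_Diff_subset)
  then show ?thesis
    using sympoly_lc_if_rayleigh[OF assms(3) True] assms(1,2)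
      log_concave_seq_if_sympoly_lc no_internal_zeros_seq_if_sympoly_lc by metis
next
  case False
  then show ?thesis
    using assms(2) unfolding log_concave_seq_def no_internal_zeros_seq_def by auto
qed

text \<open>\<open>f r, f (r - 1), \<dots>, f s, 0, 0, \<dots>\<close>: the coefficient of a squarefree monomial of
  degree \<open>j\<close> in \<open>Zflat E \<omega> (\<lambda>_. 1)\<close> is \<open>f\<^sub>r\<^sub>-\<^sub>j(\<omega>)\<close>.\<close>

definition flip_seq :: "(nat \<Rightarrow> real) \<Rightarrow> nat \<Rightarrow> nat \<Rightarrow> nat \<Rightarrow> real" where
  "flip_seq f s r j = (if j \<le> r - s then f (r - j) else 0)"

lemma log_concave_on_iff_flip_seq: "log_concave_on f s r \<longleftrightarrow> log_concave_seq (flip_seq f s r)"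
proof
  assume lc: "log_concave_on f s r"
  show "log_concave_seq (flip_seq f s r)"
    unfolding log_concave_seq_def
  proof
    fix n
    show "flip_seq f s r n * flip_seq f s r (n + 2) \<le> (flip_seq f s r (n + 1))\<^sup>2"
    proof (cases "n + 2 \<le> r - s")
      case True
      define k where "k = r - (n + 1)"
      have "s < k" "k < r"
        using True unfolding k_def by linarith+
      then have "f (k - 1) * f (k + 1) \<le> (f k)\<^sup>2"
        using lc unfolding log_concave_on_def by blast
      moreover have "k - 1 = r - (n + 2)" "k + 1 = r - n"
        using True unfolding k_def by linarith+
      ultimately show ?thesis
        using True by (simp add: flip_seq_def k_def mult.commute)
    qed (simp add: flip_seq_def)
  qed
next
  assume lc: "log_concave_seq (flip_seq f s r)"
  show "log_concave_on f s r"
    unfolding log_concave_on_def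
  proof (intro allI impI)
    fix k
    assume "s < k \<and> k < r"
    then have "r - (r - k - 1) = k + 1" "r - (r - k - 1 + 1) = k" "r - (r - k - 1 + 2) = k - 1"
      "r - k - 1 + 2 \<le> r - s"
      by linarith+
    with log_concave_seqD[OF lc, of "r - k - 1"] show "f (k - 1) * f (k + 1) \<le> (f k)\<^sup>2"
      by (simp add: flip_seq_def mult.commute)
  qed
qed

lemma no_internal_zeros_on_iff_flip_seq:
  "no_internal_zeros_on f s r \<longleftrightarrow> no_internal_zeros_seq (flip_seq f s r)"
proof
  assume niz: "no_internal_zeros_on f s r"
  show "no_internal_zeros_seq (flip_seq f s r)"
    unfolding no_internal_zeros_seq_def
  proof (intro allI impI)
    fix i j k
    assume ijk: "i < j \<and> j < k \<and> flip_seq f s r i \<noteq> 0 \<and> flip_seq f s r k \<noteq> 0"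
    then have k: "k \<le> r - s"
      by (simp add: flip_seq_def split: if_splits)
    with ijk have "f (r - k) * f (r - i) \<noteq> 0"
      by (simp add: flip_seq_def split: if_splits)
    moreover from ijk k have "s \<le> r - k" "r - k < r - j" "r - j < r - i" "r - i \<le> r"
      by linarith+
    ultimately have "f (r - j) \<noteq> 0"
      using niz unfolding no_internal_zeros_on_def by blast
    with ijk k show "flip_seq f s r j \<noteq> 0"
      by (simp add: flip_seq_def)
  qed
next
  assume niz: "no_internal_zeros_seq (flip_seq f s r)"
  show "no_internal_zeros_on f s r"
    unfolding no_internal_zeros_on_def
  proof (intro allI impI)
    fix i j k
    assume ijk: "s \<le> i \<and> i < j \<and> j < k \<and> k \<le> r \<and> f i * f k \<noteq> 0"
    then have "r - k < r - j" "r - j < r - i" "r - i \<le> r - s" "r - k \<le> r - s"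
      by linarith+
    moreover have "flip_seq f s r (r - k) \<noteq> 0" "flip_seq f s r (r - i) \<noteq> 0"
      using ijk calculation by (simp_all add: flip_seq_def)
    ultimately have "flip_seq f s r (r - j) \<noteq> 0"
      using no_internal_zeros_seqD[OF niz, of "r - k" "r - j" "r - i"] by blast
    with ijk show "f j \<noteq> 0"
      by (simp add: flip_seq_def split: if_splits)
  qed
qed

lemma esym_eq_sum_Pow:
  "esym l (int r - int m) z = (\<Sum>A\<in>Pow {1..l}. if m + card A = r then \<Prod>i\<in>A. z i else 0)"
proof (cases "int r - int m < 0")
  case True
  then show ?thesis
    unfolding esym_def by simp
next
  case False
  then have "{A. A \<subseteq> {1..l} \<and> int (card A) = int r - int m} = {A \<in> Pow {1..l}. m + card A = r}"
    by auto
  with False have "esym l (int r - int m) z = (\<Sum>A\<in>{A \<in> Pow {1..l}. m + card A = r}. \<Prod>i\<in>A. z i)"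
    unfolding esym_def by simp
  also have "\<dots> = (\<Sum>A\<in>Pow {1..l}. if m + card A = r then \<Prod>i\<in>A. z i else 0)"
    by (rule sum.inter_filter) simp
  finally show ?thesis .
qed

lemma fk_eq_sum_Pow:
  assumes "finite E" "m \<le> r"
  shows "fk E \<omega> (r - m) = (\<Sum>S\<in>Pow E. if card S + m = r then \<omega> S else 0)"
proof -
  have "{S. S \<subseteq> E \<and> card S = r - m} = {S \<in> Pow E. card S + m = r}"
    using assms(2) by auto
  then have "fk E \<omega> (r - m) = (\<Sum>S\<in>{S \<in> Pow E. card S + m = r}. \<omega> S)"
    unfolding fk_def by simp
  also have "\<dots> = (\<Sum>S\<in>Pow E. if card S + m = r then \<omega> S else 0)"
    by (rule sum.inter_filter) (simp add: assms(1))
  finally show ?thesis .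
qed

lemma Zflat_ones_eq_sympoly:
  assumes "finite E"
  shows "Zflat E \<omega> (\<lambda>_. 1) = sympoly (flip_seq (fk E \<omega>) (smin E \<omega>) (rmax E \<omega>)) 0 {1..rmax E \<omega> - smin E \<omega>}"
proof
  fix z :: "nat \<Rightarrow> real"
  let ?r = "rmax E \<omega>" and ?l = "rmax E \<omega> - smin E \<omega>"
  let ?term = "\<lambda>S A. if card S + card A = ?r then \<omega> S * (\<Prod>i\<in>A. z i) else 0"
  have "Zflat E \<omega> (\<lambda>_. 1) z = (\<Sum>S\<in>Pow E. \<Sum>A\<in>Pow {1..?l}. ?term S A)"
    unfolding Zflat_def esym_eq_sum_Pow Pow_def
    by (simp add: sum_distrib_left if_distrib cong: if_cong)
  also have "\<dots> = (\<Sum>A\<in>Pow {1..?l}. \<Sum>S\<in>Pow E. ?term S A)"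
    by (rule sum.swap)
  also have "\<dots> = (\<Sum>A\<in>Pow {1..?l}. flip_seq (fk E \<omega>) (smin E \<omega>) ?r (card A) * (\<Prod>i\<in>A. z i))"
  proof (rule sum.cong[OF refl])
    fix A
    assume "A \<in> Pow {1..?l}"
    then have "card A \<le> ?l"
      using card_mono[of "{1..?l}" A] by simp
    then have "flip_seq (fk E \<omega>) (smin E \<omega>) ?r (card A) = (\<Sum>S\<in>Pow E. if card S + card A = ?r then \<omega> S else 0)"
      using assms by (simp add: flip_seq_def fk_eq_sum_Pow)
    then show "(\<Sum>S\<in>Pow E. ?term S A) = flip_seq (fk E \<omega>) (smin E \<omega>) ?r (card A) * (\<Prod>i\<in>A. z i)"
      by (simp add: sum_distrib_right if_distrib[of "\<lambda>x. x * _"] cong: if_cong)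
  qed
  finally show "Zflat E \<omega> (\<lambda>_. 1) z = sympoly (flip_seq (fk E \<omega>) (smin E \<omega>) ?r) 0 {1..?l} z"
    unfolding sympoly_def by simp
qed

lemma fk_nonneg: "(\<And>S. S \<subseteq> E \<Longrightarrow> \<omega> S \<ge> 0) \<Longrightarrow> fk E \<omega> k \<ge> 0"
  unfolding fk_def by (auto intro: sum_nonneg)

text \<open>The equivalence holds for arbitrary \<open>r\<close> and \<open>s\<close>.\<close>

theorem proposition4p14:
  fixes E :: "'a set" and \<omega> :: "'a set \<Rightarrow> real"
  assumes "finite E"
    and "\<And>S. S \<subseteq> E \<Longrightarrow> \<omega> S \<ge> 0"
    and "\<exists>S. S \<subseteq> E \<and> \<omega> S \<noteq> 0"
  shows "(log_concave_on (fk E \<omega>) (smin E \<omega>) (rmax E \<omega>) \<and>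
          no_internal_zeros_on (fk E \<omega>) (smin E \<omega>) (rmax E \<omega>))
         \<longleftrightarrow> rayleigh (rmax E \<omega> - smin E \<omega>) (Zflat E \<omega> (\<lambda>_. 1))"
proof -
  let ?a = "flip_seq (fk E \<omega>) (smin E \<omega>) (rmax E \<omega>)"
  have "?a n \<ge> 0" for n
    using fk_nonneg[of E \<omega>] assms(2) by (simp add: flip_seq_def)
  moreover have "?a n = 0" if "n > rmax E \<omega> - smin E \<omega>" for n
    using that by (simp add: flip_seq_def)
  ultimately show ?thesis
    unfolding Zflat_ones_eq_sympoly[OF assms(1)] log_concave_on_iff_flip_seq no_internal_zeros_on_iff_flip_seq
    using rayleigh_sympoly log_concave_seq_if_rayleigh_sympoly by blast
qed

end
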